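(* Let $G$ be a finitely generated discrete group and $q:\mathcal O_{\exp}(G)\to\mathbb R_+$ a continuous submultiplicative seminorm ($q(uv)\le q(u)q(v)$ for pointwise multiplication). Then (a) the support $\operatorname{supp}(q)=\{x\in G: q(1_x)\ne0\}$ is finite, and (b) $q(1_x)\ge1$ for every $x\in\operatorname{supp}(q)$.
   Context: A semicharacter is a function $f:G\to[1,\infty)$ with $f(xy)\le f(x)f(y)$. $\mathcal O_{\exp}(G)$ is the set of functions $u:G\to\mathbb C$ with $|u|\le f$ for some semicharacter $f$, with the locally convex inductive limit topology of the spaces $\mathbb Cf^{\blacksquare}=\bigcup_\lambda\lambda f^{\blacksquare}$, $f^{\blacksquare}=\{u:|u|\le f\}$, each with the topology in which a set is closed iff it meets every $\lambda f^{\blacksquare}$ in a set closed for pointwise convergence. $1_x$ is the characteristic function of $\{x\}$. *)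

theory Defs
  imports "HOL-Analysis.Analysis" "HOL-Algebra.Algebra"
begin

text \<open>Functions G -> C are modelled as functions 'a => complex vanishing outside carrier G.\<close>

definition semicharacter :: "('a, 'b) monoid_scheme \<Rightarrow> ('a \<Rightarrow> real) \<Rightarrow> bool" where
  "semicharacter G f \<longleftrightarrow> (\<forall>x\<in>carrier G. 1 \<le> f x) \<and>
     (\<forall>x\<in>carrier G. \<forall>y\<in>carrier G. f (x \<otimes>\<^bsub>G\<^esub> y) \<le> f x * f y)"

definition fun_on :: "('a, 'b) monoid_scheme \<Rightarrow> ('a \<Rightarrow> complex) set" where
  "fun_on G = {u. \<forall>x. x \<notin> carrier G \<longrightarrow> u x = 0}"

definition Oexp :: "('a, 'b) monoid_scheme \<Rightarrow> ('a \<Rightarrow> complex) set" where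
  "Oexp G = {u \<in> fun_on G. \<exists>f. semicharacter G f \<and> (\<forall>x\<in>carrier G. cmod (u x) \<le> f x)}"

text \<open>lam f^box = {lam u : |u| <= f}, for a scalar lam >= 0 (for complex lam this is |lam| f^box).\<close>
definition box_set :: "('a, 'b) monoid_scheme \<Rightarrow> ('a \<Rightarrow> real) \<Rightarrow> real \<Rightarrow> ('a \<Rightarrow> complex) set" where
  "box_set G f lam = {u \<in> fun_on G. \<forall>x\<in>carrier G. cmod (u x) \<le> lam * f x}"

definition span_box :: "('a, 'b) monoid_scheme \<Rightarrow> ('a \<Rightarrow> real) \<Rightarrow> ('a \<Rightarrow> complex) set" where
  "span_box G f = (\<Union>lam\<in>{0..}. box_set G f lam)"

definition pointwise_top :: "('a \<Rightarrow> complex) topology" where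
  "pointwise_top = product_topology (\<lambda>_. euclidean) UNIV"

text \<open>Open sets of C f^box: a set is closed iff it meets every lam f^box in a pointwise closed set.\<close>
definition step_open :: "('a, 'b) monoid_scheme \<Rightarrow> ('a \<Rightarrow> real) \<Rightarrow> ('a \<Rightarrow> complex) set \<Rightarrow> bool" where
  "step_open G f U \<longleftrightarrow> U \<subseteq> span_box G f \<and>
     (\<forall>lam\<ge>0. closedin pointwise_top ((span_box G f - U) \<inter> box_set G f lam))"

definition conv_set :: "('a \<Rightarrow> complex) set \<Rightarrow> bool" where
  "conv_set V \<longleftrightarrow> (\<forall>u\<in>V. \<forall>v\<in>V. \<forall>t::real. 0 \<le> t \<and> t \<le> 1 \<longrightarrow>
      (\<lambda>x. of_real t * u x + of_real (1 - t) * v x) \<in> V)"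

definition lc_vector_topology :: "('a \<Rightarrow> complex) topology \<Rightarrow> bool" where
  "lc_vector_topology T \<longleftrightarrow>
     continuous_map (prod_topology T T) T (\<lambda>(u, v). (\<lambda>x. u x + v x)) \<and>
     continuous_map (prod_topology (euclidean :: complex topology) T) T (\<lambda>(c, u). (\<lambda>x. c * u x)) \<and>
     (\<forall>U u. openin T U \<and> u \<in> U \<longrightarrow> (\<exists>V. openin T V \<and> u \<in> V \<and> V \<subseteq> U \<and> conv_set V))"

text \<open>Locally convex topologies on O_exp(G) for which all inclusions C f^box -> O_exp(G) are continuous.\<close>
definition admissible_top :: "('a, 'b) monoid_scheme \<Rightarrow> ('a \<Rightarrow> complex) topology \<Rightarrow> bool" where
  "admissible_top G T \<longleftrightarrow> topspace T = Oexp G \<and> lc_vector_topology T \<and>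
     (\<forall>f. semicharacter G f \<longrightarrow> (\<forall>V. openin T V \<longrightarrow> step_open G f (V \<inter> span_box G f)))"

text \<open>The locally convex inductive limit topology: the finest such topology (supremum).\<close>
definition Oexp_top :: "('a, 'b) monoid_scheme \<Rightarrow> ('a \<Rightarrow> complex) topology" where
  "Oexp_top G = topology_generated_by (\<Union>{{U. openin T U} | T. admissible_top G T})"

definition seminorm_on :: "('a \<Rightarrow> complex) set \<Rightarrow> (('a \<Rightarrow> complex) \<Rightarrow> real) \<Rightarrow> bool" where
  "seminorm_on S q \<longleftrightarrow> (\<forall>u\<in>S. 0 \<le> q u) \<and>
     (\<forall>u\<in>S. \<forall>v\<in>S. q (\<lambda>x. u x + v x) \<le> q u + q v) \<and>
     (\<forall>c. \<forall>u\<in>S. q (\<lambda>x. c * u x) = cmod c * q u)"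

definition finitely_generated :: "('a, 'b) monoid_scheme \<Rightarrow> bool" where
  "finitely_generated G \<longleftrightarrow> (\<exists>S. finite S \<and> S \<subseteq> carrier G \<and> generate G S = carrier G)"

definition point_ind :: "'a \<Rightarrow> 'a \<Rightarrow> complex" where
  "point_ind x = (\<lambda>y. if y = x then 1 else 0)"

end

theory Submission
  imports Defs
begin

text \<open>Part (b) is immediate: \<open>1\<^sub>x\<close> is idempotent, so \<open>q(1\<^sub>x) \<le> q(1\<^sub>x)\<^sup>2\<close>.
  For part (a), continuity of \<open>q\<close> at \<open>0\<close> makes \<open>{u. q u < 1}\<close> an open neighbourhood of \<open>0\<close>.
  Its trace on the unit ball \<open>1\<^sup>\<blacksquare>\<close> of the constant semicharacter is open for pointwise
  convergence, hence contains a neighbourhood of \<open>0\<close> constraining only finitely many coordinates.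
  So \<open>q(1\<^sub>x) < 1\<close> for all but finitely many \<open>x\<close>, and by (b) these \<open>1\<^sub>x\<close> have \<open>q(1\<^sub>x) = 0\<close>.\<close>

lemma semicharacter_one: "semicharacter G (\<lambda>_. 1)"
  by (simp add: semicharacter_def)

lemma semicharacter_add:
  assumes "semicharacter G f" "semicharacter G g"
  shows "semicharacter G (\<lambda>x. f x + g x)"
  unfolding semicharacter_def
proof safe
  fix x assume "x \<in> carrier G"
  then show "1 \<le> f x + g x"
    using assms unfolding semicharacter_def by force
next
  fix x y assume "x \<in> carrier G" "y \<in> carrier G"
  then have "f (x \<otimes>\<^bsub>G\<^esub> y) \<le> f x * f y" "1 \<le> f x" "1 \<le> f y"
    and "g (x \<otimes>\<^bsub>G\<^esub> y) \<le> g x * g y" "1 \<le> g x" "1 \<le> g y"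
    using assms unfolding semicharacter_def by auto
  moreover have "f x * f y + g x * g y \<le> (f x + g x) * (f y + g y)"
    using calculation by (simp add: algebra_simps)
  ultimately show "f (x \<otimes>\<^bsub>G\<^esub> y) + g (x \<otimes>\<^bsub>G\<^esub> y) \<le> (f x + g x) * (f y + g y)"
    by linarith
qed

lemma semicharacter_scale:
  assumes "semicharacter G f" "1 \<le> c"
  shows "semicharacter G (\<lambda>x. c * f x)"
  unfolding semicharacter_def
proof safe
  fix x assume "x \<in> carrier G"
  then have "1 \<le> f x"
    using assms unfolding semicharacter_def by force
  then show "1 \<le> c * f x"
    using assms(2) by (metis mult_mono' mult_1 order_trans zero_le_one)
next
  fix x y assume "x \<in> carrier G" "y \<in> carrier G"
  then have f: "f (x \<otimes>\<^bsub>G\<^esub> y) \<le> f x * f y" "1 \<le> f x" "1 \<le> f y"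
    using assms unfolding semicharacter_def by auto
  have "c * f (x \<otimes>\<^bsub>G\<^esub> y) \<le> c * (f x * f y)"
    using f assms by simp
  also have "\<dots> \<le> c * (c * (f x * f y))"
    using f assms by (simp add: mult_le_cancel_left1)
  finally show "c * f (x \<otimes>\<^bsub>G\<^esub> y) \<le> c * f x * (c * f y)"
    by (simp add: algebra_simps)
qed

lemma Oexp_add:
  assumes "u \<in> Oexp G" "v \<in> Oexp G"
  shows "(\<lambda>x. u x + v x) \<in> Oexp G"
proof -
  obtain f g where "semicharacter G f" "semicharacter G g"
    and "\<forall>x\<in>carrier G. cmod (u x) \<le> f x" "\<forall>x\<in>carrier G. cmod (v x) \<le> g x"
    using assms unfolding Oexp_def by blast
  then have "semicharacter G (\<lambda>x. f x + g x)"
    and "\<forall>x\<in>carrier G. cmod (u x + v x) \<le> f x + g x"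
    using semicharacter_add norm_triangle_le add_mono by blast+
  then show ?thesis
    using assms unfolding Oexp_def fun_on_def by auto
qed

lemma Oexp_scale:
  assumes "u \<in> Oexp G"
  shows "(\<lambda>x. c * u x) \<in> Oexp G"
proof -
  obtain f where f: "semicharacter G f" "\<forall>x\<in>carrier G. cmod (u x) \<le> f x"
    using assms unfolding Oexp_def by blast
  have "semicharacter G (\<lambda>x. max 1 (cmod c) * f x)"
    using f by (intro semicharacter_scale) auto
  moreover have "cmod (c * u x) \<le> max 1 (cmod c) * f x" if "x \<in> carrier G" for x
    unfolding norm_mult using f that by (intro mult_mono) auto
  ultimately show ?thesis
    using assms unfolding Oexp_def fun_on_def by auto
qed

lemma conv_set_Oexp: "conv_set (Oexp G)"
  unfolding conv_set_def by (auto intro!: Oexp_add Oexp_scale)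

lemma zero_in_Oexp: "(\<lambda>_. 0) \<in> Oexp G"
  unfolding Oexp_def fun_on_def using semicharacter_one by fastforce

lemma point_ind_in_Oexp: "x \<in> carrier G \<Longrightarrow> point_ind x \<in> Oexp G"
  unfolding Oexp_def fun_on_def point_ind_def using semicharacter_one by fastforce

lemma point_ind_in_box_set_one: "x \<in> carrier G \<Longrightarrow> point_ind x \<in> box_set G (\<lambda>_. 1) 1"
  unfolding box_set_def fun_on_def point_ind_def by auto

lemma box_set_subset_span_box: "0 \<le> lam \<Longrightarrow> box_set G f lam \<subseteq> span_box G f"
  unfolding span_box_def by auto

lemma span_box_subset_Oexp:
  assumes f: "semicharacter G f"
  shows "span_box G f \<subseteq> Oexp G"
proof
  fix u assume "u \<in> span_box G f"
  then obtain lam where "0 \<le> lam" "u \<in> fun_on G" and u: "\<forall>x\<in>carrier G. cmod (u x) \<le> lam * f x"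
    unfolding span_box_def box_set_def by auto
  moreover have "semicharacter G (\<lambda>x. max 1 lam * f x)"
    using f by (intro semicharacter_scale) auto
  moreover have "cmod (u x) \<le> max 1 lam * f x" if "x \<in> carrier G" for x
  proof -
    have "0 \<le> f x"
      using f that unfolding semicharacter_def by force
    then show ?thesis
      using u that by (smt (verit) mult_right_mono max.cobounded2)
  qed
  ultimately show "u \<in> Oexp G"
    unfolding Oexp_def by blast
qed

lemma closedin_box_set: "closedin pointwise_top (box_set G f lam)"
proof -
  define S where "S x = (if x \<in> carrier G then cball (0::complex) (lam * f x) else {0})" for x
  have "box_set G f lam = PiE UNIV S"
    unfolding box_set_def fun_on_def S_def by (force simp: PiE_iff split: if_splits)
  moreover have "closedin (product_topology (\<lambda>_. euclidean) UNIV) (PiE UNIV S)"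
    unfolding closedin_product_topology S_def by auto
  ultimately show ?thesis
    unfolding pointwise_top_def by simp
qed

lemma step_open_empty: "step_open G f {}"
  unfolding step_open_def
proof (intro conjI allI impI)
  fix lam :: real assume "0 \<le> lam"
  then have "(span_box G f - {}) \<inter> box_set G f lam = box_set G f lam"
    using box_set_subset_span_box by blast
  then show "closedin pointwise_top ((span_box G f - {}) \<inter> box_set G f lam)"
    by (simp add: closedin_box_set)
qed simp

lemma step_open_span_box: "step_open G f (span_box G f)"
  unfolding step_open_def by simp

lemma istopology_step_open_trace: "istopology (\<lambda>S. step_open G f (S \<inter> span_box G f))"
  unfolding istopology_def
proof (intro conjI allI impI)
  fix S T
  assume S: "step_open G f (S \<inter> span_box G f)" and T: "step_open G f (T \<inter> span_box G f)"
  show "step_open G f (S \<inter> T \<inter> span_box G f)"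
    unfolding step_open_def
  proof (intro conjI allI impI)
    fix lam :: real assume "0 \<le> lam"
    have "(span_box G f - S \<inter> T \<inter> span_box G f) \<inter> box_set G f lam =
        (span_box G f - S \<inter> span_box G f) \<inter> box_set G f lam \<union>
        (span_box G f - T \<inter> span_box G f) \<inter> box_set G f lam"
      by blast
    then show "closedin pointwise_top ((span_box G f - S \<inter> T \<inter> span_box G f) \<inter> box_set G f lam)"
      using S T \<open>0 \<le> lam\<close> unfolding step_open_def by (simp add: closedin_Un)
  qed (rule Int_lower2)
next
  fix K :: "('a \<Rightarrow> complex) set set"
  assume K: "\<forall>S\<in>K. step_open G f (S \<inter> span_box G f)"
  show "step_open G f (\<Union>K \<inter> span_box G f)"
  proof (cases "K = {}")
    case True
    then show ?thesis
      using step_open_empty by simp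
  next
    case False
    show ?thesis
      unfolding step_open_def
    proof (intro conjI allI impI)
      fix lam :: real assume "0 \<le> lam"
      have "(span_box G f - \<Union>K \<inter> span_box G f) \<inter> box_set G f lam =
          (\<Inter>S\<in>K. (span_box G f - S \<inter> span_box G f) \<inter> box_set G f lam)"
        using False by blast
      moreover have "closedin pointwise_top (\<Inter>S\<in>K. (span_box G f - S \<inter> span_box G f) \<inter> box_set G f lam)"
        using K False \<open>0 \<le> lam\<close> unfolding step_open_def by (intro closedin_Inter) auto
      ultimately show "closedin pointwise_top ((span_box G f - \<Union>K \<inter> span_box G f) \<inter> box_set G f lam)"
        by simp
    qed (rule Int_lower2)
  qed
qed

lemma openin_Oexp_top_step_open:
  assumes "openin (Oexp_top G) S" "semicharacter G f"
  shows "step_open G f (S \<inter> span_box G f)"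
proof -
  have "generate_topology_on (\<Union>{{U. openin T U} | T. admissible_top G T}) S"
    using assms(1) unfolding Oexp_top_def openin_topology_generated_by_iff .
  then show ?thesis
  proof (rule generate_topology_on_coarsest[OF istopology_step_open_trace, rotated])
    fix U assume "U \<in> \<Union>{{U. openin T U} | T. admissible_top G T}"
    then obtain T where "admissible_top G T" "openin T U"
      by blast
    then show "step_open G f (U \<inter> span_box G f)"
      using assms(2) unfolding admissible_top_def by blast
  qed
qed

definition indiscrete_topology :: "'a set \<Rightarrow> 'a topology" where
  "indiscrete_topology A = topology (\<lambda>U. U = {} \<or> U = A)"

lemma openin_indiscrete_topology: "openin (indiscrete_topology A) U \<longleftrightarrow> U = {} \<or> U = A"
proof -
  have "istopology (\<lambda>U. U = {} \<or> U = A)"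
    unfolding istopology_def
  proof (intro conjI allI impI)
    fix K :: "'a set set" assume "\<forall>U\<in>K. U = {} \<or> U = A"
    then show "\<Union>K = {} \<or> \<Union>K = A"
      by blast
  qed auto
  then show ?thesis
    unfolding indiscrete_topology_def by (simp add: topology_inverse')
qed

lemma topspace_indiscrete_topology: "topspace (indiscrete_topology A) = A"
  unfolding topspace_def openin_indiscrete_topology by auto

lemma continuous_map_indiscrete_topology:
  "continuous_map T (indiscrete_topology A) h \<longleftrightarrow> h \<in> topspace T \<rightarrow> A"
proof -
  have "{x \<in> topspace T. h x \<in> A} = topspace T" if "h \<in> topspace T \<rightarrow> A"
    using that by blast
  then show ?thesis
    unfolding continuous_map_def topspace_indiscrete_topology openin_indiscrete_topology
    by auto
qed

text \<open>Some admissible topology exists, so the inductive limit topology lives on all of \<open>\<O>\<^sub>e\<^sub>x\<^sub>p(G)\<close>.\<close>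

lemma admissible_top_indiscrete: "admissible_top G (indiscrete_topology (Oexp G))"
  unfolding admissible_top_def lc_vector_topology_def
proof (intro conjI allI impI)
  show "topspace (indiscrete_topology (Oexp G)) = Oexp G"
    by (rule topspace_indiscrete_topology)
  show "continuous_map (prod_topology (indiscrete_topology (Oexp G)) (indiscrete_topology (Oexp G)))
      (indiscrete_topology (Oexp G)) (\<lambda>(u, v) x. u x + v x)"
    unfolding continuous_map_indiscrete_topology topspace_prod_topology topspace_indiscrete_topology
    by (auto intro: Oexp_add)
  show "continuous_map (prod_topology euclidean (indiscrete_topology (Oexp G)))
      (indiscrete_topology (Oexp G)) (\<lambda>(c, u) x. c * u x)"
    unfolding continuous_map_indiscrete_topology topspace_prod_topology topspace_indiscrete_topology
    by (auto intro: Oexp_scale)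
next
  fix U u
  assume "openin (indiscrete_topology (Oexp G)) U \<and> u \<in> U"
  then have "U = Oexp G" "u \<in> U"
    by (auto simp: openin_indiscrete_topology)
  then show "\<exists>V. openin (indiscrete_topology (Oexp G)) V \<and> u \<in> V \<and> V \<subseteq> U \<and> conv_set V"
    using conv_set_Oexp openin_indiscrete_topology by blast
next
  fix f V
  assume "semicharacter G f" "openin (indiscrete_topology (Oexp G)) V"
  then consider "V \<inter> span_box G f = {}" | "V \<inter> span_box G f = span_box G f"
    using span_box_subset_Oexp[of G f] by (auto simp: openin_indiscrete_topology)
  then show "step_open G f (V \<inter> span_box G f)"
    by cases (simp_all add: step_open_empty step_open_span_box)
qed

lemma topspace_Oexp_top: "Oexp G \<subseteq> topspace (Oexp_top G)"
  unfolding Oexp_top_def topology_generated_by_topspace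
  using admissible_top_indiscrete[of G] openin_indiscrete_topology[of "Oexp G" "Oexp G"] by blast

lemma topspace_pointwise_top: "topspace pointwise_top = UNIV"
  by (simp add: pointwise_top_def)

lemma pointwise_neighbourhood_contains_almost_all_point_ind:
  assumes "openin pointwise_top U" "(\<lambda>_. 0) \<in> U"
  shows "finite {x. point_ind x \<notin> U}"
proof -
  obtain V where V: "finite {i. V i \<noteq> UNIV}" "Pi\<^sub>E UNIV V \<subseteq> U" "(\<lambda>_. 0) \<in> Pi\<^sub>E UNIV V"
    using assms unfolding pointwise_top_def openin_product_topology_alt by force
  have "{x. point_ind x \<notin> U} \<subseteq> {i. V i \<noteq> UNIV}"
  proof (rule subsetI, rule ccontr)
    fix x assume "x \<in> {x. point_ind x \<notin> U}" "x \<notin> {i. V i \<noteq> UNIV}"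
    moreover from this V(3) have "point_ind x \<in> Pi\<^sub>E UNIV V"
      by (auto simp: point_ind_def)
    ultimately show False
      using V(2) by blast
  qed
  then show ?thesis
    using V(1) finite_subset by blast
qed

text \<open>Continuity at \<open>0\<close> in the inductive limit, tested on the unit ball of the constant
  semicharacter \<open>1\<close>, where \<open>1\<^sub>x\<close> lives for every \<open>x\<close>.\<close>

lemma Oexp_top_neighbourhood_contains_almost_all_point_ind:
  assumes "openin (Oexp_top G) S" "(\<lambda>_. 0) \<in> S"
  shows "finite {x \<in> carrier G. point_ind x \<notin> S}"
proof -
  let ?B = "box_set G (\<lambda>_. 1) 1" and ?C = "span_box G (\<lambda>_. 1)"
  have "closedin pointwise_top ((?C - S \<inter> ?C) \<inter> ?B)"
    using openin_Oexp_top_step_open[OF assms(1) semicharacter_one] unfolding step_open_def by simp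
  then have "openin pointwise_top (- ((?C - S \<inter> ?C) \<inter> ?B))"
    unfolding closedin_def topspace_pointwise_top Compl_eq_Diff_UNIV by (rule conjunct2)
  moreover have "(\<lambda>_. 0) \<in> - ((?C - S \<inter> ?C) \<inter> ?B)"
    using assms(2) by blast
  ultimately have "finite {x. point_ind x \<notin> - ((?C - S \<inter> ?C) \<inter> ?B)}"
    by (rule pointwise_neighbourhood_contains_almost_all_point_ind)
  moreover have "{x \<in> carrier G. point_ind x \<notin> S} \<subseteq> {x. point_ind x \<notin> - ((?C - S \<inter> ?C) \<inter> ?B)}"
  proof
    fix x assume "x \<in> {x \<in> carrier G. point_ind x \<notin> S}"
    then have "point_ind x \<in> ?B" "point_ind x \<notin> S"
      using point_ind_in_box_set_one by auto
    then have "point_ind x \<in> (?C - S \<inter> ?C) \<inter> ?B"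
      using box_set_subset_span_box[OF zero_le_one, of G "\<lambda>_. 1"] by blast
    then show "x \<in> {x. point_ind x \<notin> - ((?C - S \<inter> ?C) \<inter> ?B)}"
      by (simp only: mem_Collect_eq Compl_iff not_not)
  qed
  ultimately show ?thesis
    using finite_subset by blast
qed

lemma point_ind_mult_self: "(\<lambda>y. point_ind x y * point_ind x y) = point_ind x"
  by (auto simp: point_ind_def)

lemma submultiplicative_point_ind_ge_one:
  assumes "seminorm_on (Oexp G) q"
    and "\<forall>u\<in>Oexp G. \<forall>v\<in>Oexp G. q (\<lambda>x. u x * v x) \<le> q u * q v"
    and "x \<in> carrier G" "q (point_ind x) \<noteq> 0"
  shows "1 \<le> q (point_ind x)"
proof -
  have "q (point_ind x) * 1 \<le> q (point_ind x) * q (point_ind x)"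
    using assms(2) point_ind_in_Oexp[OF assms(3)] by (metis point_ind_mult_self mult_1_right)
  moreover have "0 < q (point_ind x)"
    using assms(1,4) point_ind_in_Oexp[OF assms(3)] unfolding seminorm_on_def by force
  ultimately show ?thesis
    by (metis mult_le_cancel_left_pos)
qed

lemma seminorm_on_zero:
  assumes "seminorm_on (Oexp G) q"
  shows "q (\<lambda>_. 0) = 0"
proof -
  have "q (\<lambda>x. 0 * u x) = cmod 0 * q u" if "u \<in> Oexp G" for u
    using assms that unfolding seminorm_on_def by blast
  from this[OF zero_in_Oexp] show ?thesis
    by simp
qed

lemma continuous_map_Oexp_top_sublevel_open:
  assumes "continuous_map (subtopology (Oexp_top G) (Oexp G)) euclideanreal q"
  obtains S where "openin (Oexp_top G) S" "{u \<in> Oexp G. q u < c} = S \<inter> Oexp G"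
proof -
  have "topspace (subtopology (Oexp_top G) (Oexp G)) = Oexp G"
    using topspace_Oexp_top[of G] by auto
  moreover have "openin (subtopology (Oexp_top G) (Oexp G))
      {u \<in> topspace (subtopology (Oexp_top G) (Oexp G)). q u \<in> {..<c}}"
    using assms by (rule openin_continuous_map_preimage) simp
  ultimately have "openin (subtopology (Oexp_top G) (Oexp G)) {u \<in> Oexp G. q u < c}"
    by simp
  then show ?thesis
    using that unfolding openin_subtopology by auto
qed

theorem mainTheorem13:
  fixes G :: "('a, 'b) monoid_scheme" and q :: "('a \<Rightarrow> complex) \<Rightarrow> real"
  assumes "group G"
    and "finitely_generated G"
    and "seminorm_on (Oexp G) q"
    and "continuous_map (subtopology (Oexp_top G) (Oexp G)) euclideanreal q"
    and "\<forall>u\<in>Oexp G. \<forall>v\<in>Oexp G. q (\<lambda>x. u x * v x) \<le> q u * q v"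
  shows "finite {x \<in> carrier G. q (point_ind x) \<noteq> 0}
    \<and> (\<forall>x \<in> carrier G. q (point_ind x) \<noteq> 0 \<longrightarrow> 1 \<le> q (point_ind x))"
proof -
  note support_ge_one = submultiplicative_point_ind_ge_one[OF assms(3,5)]
  obtain S where S: "openin (Oexp_top G) S" "{u \<in> Oexp G. q u < 1} = S \<inter> Oexp G"
    using continuous_map_Oexp_top_sublevel_open[OF assms(4)] .
  have "(\<lambda>_. 0) \<in> {u \<in> Oexp G. q u < 1}"
    using zero_in_Oexp[of G] seminorm_on_zero[OF assms(3)] by simp
  then have "(\<lambda>_. 0) \<in> S"
    unfolding S(2) by (rule IntD1)
  with S(1) have "finite {x \<in> carrier G. point_ind x \<notin> S}"
    by (rule Oexp_top_neighbourhood_contains_almost_all_point_ind)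
  moreover have "{x \<in> carrier G. q (point_ind x) \<noteq> 0} \<subseteq> {x \<in> carrier G. point_ind x \<notin> S}"
  proof safe
    fix x assume x: "x \<in> carrier G" "q (point_ind x) \<noteq> 0" "point_ind x \<in> S"
    have "point_ind x \<in> {u \<in> Oexp G. q u < 1}"
      unfolding S(2) using x(3) point_ind_in_Oexp[OF x(1)] by (rule IntI)
    then show False
      using support_ge_one[OF x(1,2)] by simp
  qed
  ultimately have "finite {x \<in> carrier G. q (point_ind x) \<noteq> 0}"
    by (rule finite_subset[rotated])
  then show ?thesis
    using support_ge_one by blast
qed

end
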